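(* Let $n\ge2$, $m=3$, $r=1$, and $E_1\ge E_2\ge\dots\ge E_n>0$. Define $$U_i=\frac{i}{\frac{3}{E_1}+\sum_{k=2}^i\frac1{E_k}}\ (1\le i\le n),\qquad V_i=\frac{i-1}{\sum_{k=1}^i\frac1{E_k}}\ (2\le i\le n),$$ let $u$ be the least index in $\arg\max_{1\le i\le n}U_i$ and $v$ the least index in $\arg\max_{2\le i\le n}V_i$. If $V_v>U_u$, then $\mathbf{p}^*$ with $p^*_k=\frac{1/E_k}{\sum_{j=1}^v1/E_j}$ for $k\le v$ and $p^*_k=0$ for $k>v$ maximizes $f^{\mathrm{worst}}$ over $\mathcal{I}$. If $U_u\ge V_v$, then $\mathbf{p}^*$ with $p^*_1=\frac{3/E_1}{3/E_1+\sum_{j=2}^u1/E_j}$, $p^*_k=\frac{1/E_k}{3/E_1+\sum_{j=2}^u1/E_j}$ for $2\le k\le u$, and $p^*_k=0$ for $k>u$, maximizes $f^{\mathrm{worst}}$ over $\mathcal{I}$. In both cases the optimal value $\max_{\mathbf{p}\in\mathcal{I}}f^{\mathrm{worst}}(\mathbf{p})$ equals $\max\{U_u,V_v\}$.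
   Context: $\mathcal{I}=\{\mathbf{p}\in[0,1]^n:\sum_kp_k=1\}$; $\mathcal{J}_2=\{\mathbf{x}\in\{0,1,2\}^n:\sum_jx_j=2\}$; $f(\mathbf{p},\mathbf{x})=\sum_k\frac{E_kp_k}{1+x_k}$; $f^{\mathrm{worst}}(\mathbf{p})=\min_{\mathbf{x}\in\mathcal{J}_2}f(\mathbf{p},\mathbf{x})$. *)

theory Defs
  imports Complex_Main
begin

definition simplexI :: "nat \<Rightarrow> (nat \<Rightarrow> real) set" where
  "simplexI n = {p. (\<forall>k\<in>{1..n}. 0 \<le> p k \<and> p k \<le> 1) \<and> (\<Sum>k=1..n. p k) = 1}"

text \<open>J_2: x in {0,1,2}^n with sum 2 (extended by 0 outside {1..n} so the set is finite).\<close>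
definition J2 :: "nat \<Rightarrow> (nat \<Rightarrow> nat) set" where
  "J2 n = {x. (\<forall>j\<in>{1..n}. x j \<le> 2) \<and> (\<forall>j. j \<notin> {1..n} \<longrightarrow> x j = 0)
              \<and> (\<Sum>j=1..n. x j) = 2}"

definition fval :: "nat \<Rightarrow> (nat \<Rightarrow> real) \<Rightarrow> (nat \<Rightarrow> real) \<Rightarrow> (nat \<Rightarrow> nat) \<Rightarrow> real" where
  "fval n E p x = (\<Sum>k=1..n. E k * p k / (1 + real (x k)))"

definition fworst :: "nat \<Rightarrow> (nat \<Rightarrow> real) \<Rightarrow> (nat \<Rightarrow> real) \<Rightarrow> real" where
  "fworst n E p = Min (fval n E p ` J2 n)"

definition Uval :: "(nat \<Rightarrow> real) \<Rightarrow> nat \<Rightarrow> real" where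
  "Uval E i = real i / (3 / E 1 + (\<Sum>k=2..i. 1 / E k))"

definition Vval :: "(nat \<Rightarrow> real) \<Rightarrow> nat \<Rightarrow> real" where
  "Vval E i = (real i - 1) / (\<Sum>k=1..i. 1 / E k)"

definition uidx :: "nat \<Rightarrow> (nat \<Rightarrow> real) \<Rightarrow> nat" where
  "uidx n E = (LEAST i. i \<in> {1..n} \<and> (\<forall>j\<in>{1..n}. Uval E j \<le> Uval E i))"

definition vidx :: "nat \<Rightarrow> (nat \<Rightarrow> real) \<Rightarrow> nat" where
  "vidx n E = (LEAST i. i \<in> {2..n} \<and> (\<forall>j\<in>{2..n}. Vval E j \<le> Vval E i))"

end

theory Submission
  imports Defs "HOL-Library.FuncSet"
begin

text \<open>Write a_k = E_k p_k, S = \<Sum>_k a_k and W = max U_u V_v. For the upper bound let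
  M \<ge> b be the two largest a_k. Putting both attack units on the largest coordinate, or one
  on each of the two largest, gives fworst p \<le> S - max (2M/3) ((M+b)/2). On the other hand
  \<Sum>_k a_k/E_k = 1, so S - W = \<Sum>_k a_k (1 - W/E_k) \<le> (M-b) e_1 + b \<Sum>_k e_k, where e_k is
  the positive part of 1 - W/E_k. As E is decreasing, e is supported on an initial segment
  {1..q}, and U_q \<le> W, V_q \<le> W say exactly that 2 e_1 + \<Sum>_k e_k \<le> 2 and \<Sum>_k e_k \<le> 1;
  maximising the linear bound under these constraints gives S - W \<le> max (2M/3) ((M+b)/2),
  hence fworst p \<le> W. For the lower bound, the two candidate allocations make E_k p_k
  constant on their support (apart from the triple weight at index 1 in the U-case), and an
  attack unit then removes at most half of that constant.\<close>

lemma sum_if_le_atLeastAtMost: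
  fixes f :: "nat \<Rightarrow> 'a::comm_monoid_add"
  assumes "v \<le> n"
  shows "(\<Sum>k=m..n. if k \<le> v then f k else 0) = (\<Sum>k=m..v. f k)"
proof -
  have "(\<Sum>k=m..n. if k \<le> v then f k else 0) = (\<Sum>k\<in>{k\<in>{m..n}. k \<le> v}. f k)"
    by (rule sum.inter_filter[symmetric]) simp
  also have "{k\<in>{m..n}. k \<le> v} = {m..v}" using assms by auto
  finally show ?thesis .
qed

lemma sum_atLeast1_head:
  fixes f :: "nat \<Rightarrow> 'a::comm_monoid_add"
  shows "1 \<le> n \<Longrightarrow> (\<Sum>k=1..n. f k) = f 1 + (\<Sum>k=2..n. f k)"
  using sum.atLeast_Suc_atMost[of 1 n f] by (simp add: numeral_2_eq_2)

lemma finite_obtain_argmax: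
  fixes f :: "'a \<Rightarrow> 'b::linorder"
  assumes "finite A" "A \<noteq> {}"
  obtains i where "i \<in> A" "\<And>k. k \<in> A \<Longrightarrow> f k \<le> f i"
proof -
  have "Max (f ` A) \<in> f ` A" using assms by simp
  then obtain i where "i \<in> A" "f i = Max (f ` A)" by auto
  then show ?thesis using that assms by simp
qed

text \<open>The left side is linear in (e1, s); its maximum over e1 \<le> s \<le> 1, 2 e1 + s \<le> 2 is
  attained at (1/2, 1) or at (2/3, 2/3), according to the sign of 3b - M.\<close>

lemma top_two_excess_bound:
  fixes M b e0 e1 s :: real
  assumes "0 \<le> b" "b \<le> M" "e0 \<le> e1" "e1 \<le> s" "s \<le> 1" "2 * e1 + s \<le> 2"
  shows "(M - b) * e0 + b * s \<le> max (2/3 * M) ((M + b) / 2)"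
proof -
  have "(M - b) * e0 \<le> (M - b) * e1" using assms by (intro mult_left_mono) auto
  moreover have "(M - b) * e1 + b * s \<le> max (2/3 * M) ((M + b) / 2)"
  proof (cases "M \<le> 3 * b")
    case True
    have "(M - b) / 2 * (2 * e1 + s) \<le> (M - b) / 2 * 2"
      using assms by (intro mult_left_mono) auto
    moreover have "(3 * b - M) / 2 * s \<le> (3 * b - M) / 2 * 1"
      using assms True by (intro mult_left_mono) auto
    ultimately have "(M - b) * e1 + b * s \<le> (M + b) / 2" by (simp add: field_simps)
    then show ?thesis by linarith
  next
    case False
    have "M / 3 * (2 * e1 + s) \<le> M / 3 * 2"
      using assms by (intro mult_left_mono) auto
    moreover have "(M / 3 - b) * (e1 - s) \<le> 0"
      using assms False by (intro mult_nonneg_nonpos) auto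
    ultimately have "(M - b) * e1 + b * s \<le> 2/3 * M" by (simp add: field_simps)
    then show ?thesis by linarith
  qed
  ultimately show ?thesis by linarith
qed

lemma sum_mult_le_top_two:
  fixes a e :: "'a \<Rightarrow> real"
  assumes "finite A" "i \<in> A" "\<And>k. k \<in> A - {i} \<Longrightarrow> a k \<le> b" "\<And>k. k \<in> A \<Longrightarrow> 0 \<le> e k"
  shows "(\<Sum>k\<in>A. a k * e k) \<le> (a i - b) * e i + b * (\<Sum>k\<in>A. e k)"
proof -
  have "(\<Sum>k\<in>A - {i}. a k * e k) \<le> (\<Sum>k\<in>A - {i}. b * e k)"
    using assms by (intro sum_mono mult_right_mono) auto
  then show ?thesis
    using assms(1,2) by (simp add: sum.remove sum_distrib_left[symmetric] algebra_simps)
qed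

lemma antimono_positive_part_truncation:
  fixes d :: "nat \<Rightarrow> real"
  assumes "\<And>i j. 1 \<le> i \<Longrightarrow> i \<le> j \<Longrightarrow> j \<le> n \<Longrightarrow> d j \<le> d i"
  obtains q where "q \<le> n" "\<And>k. k \<in> {1..n} \<Longrightarrow> max (d k) 0 = (if k \<le> q then d k else 0)"
proof
  define Q where "Q = insert 0 {k\<in>{1..n}. 0 < d k}"
  have "finite Q" "Q \<noteq> {}" by (auto simp: Q_def)
  show "Max Q \<le> n" using \<open>finite Q\<close> by (auto simp: Q_def)
  fix k assume k: "k \<in> {1..n}"
  show "max (d k) 0 = (if k \<le> Max Q then d k else 0)"
  proof (cases "k \<le> Max Q")
    case True
    then have "Max Q \<in> {1..n}" "0 < d (Max Q)"
      using Max_in[OF \<open>finite Q\<close> \<open>Q \<noteq> {}\<close>] k by (auto simp: Q_def)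
    then show ?thesis using assms[of k "Max Q"] True k by auto
  next
    case False
    have "k \<notin> Q" using False \<open>finite Q\<close> by auto
    then have "\<not> 0 < d k" using k by (auto simp: Q_def)
    then show ?thesis using False by auto
  qed
qed

lemma finite_J2: "finite (J2 n)"
proof -
  have "inj_on (\<lambda>x. restrict x {1..n}) (J2 n)"
  proof (rule inj_onI, rule ext)
    fix x y j assume "x \<in> J2 n" "y \<in> J2 n" "restrict x {1..n} = restrict y {1..n}"
    then show "x j = y j" by (cases "j \<in> {1..n}") (auto simp: J2_def dest: fun_cong[of _ _ j])
  qed
  moreover have "(\<lambda>x. restrict x {1..n}) ` J2 n \<subseteq> PiE {1..n} (\<lambda>_. {..2})"
    by (auto simp: J2_def)
  then have "finite ((\<lambda>x. restrict x {1..n}) ` J2 n)"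
    by (rule finite_subset) (simp add: finite_PiE)
  ultimately show ?thesis using finite_imageD by blast
qed

lemma J2_concentrated: "i \<in> {1..n} \<Longrightarrow> (\<lambda>j. if j = i then 2 else 0) \<in> J2 n"
  by (auto simp: J2_def)

lemma J2_split:
  assumes "i \<in> {1..n}" "j \<in> {1..n}" "i \<noteq> j"
  shows "(\<lambda>k. if k = i \<or> k = j then 1 else 0) \<in> J2 n"
proof -
  have "(\<lambda>k::nat. if k = i \<or> k = j then 1 else 0::nat) = (\<lambda>k. (if k = i then 1 else 0) + (if k = j then 1 else 0))"
    using assms(3) by auto
  then show ?thesis using assms by (auto simp: J2_def sum.distrib)
qed

lemma J2_D:
  assumes "x \<in> J2 n"
  shows "(\<Sum>k=1..n. real (x k)) = 2" "k \<in> {1..n} \<Longrightarrow> x k \<le> 2"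
proof -
  have "(\<Sum>k=1..n. x k) = 2" using assms by (simp add: J2_def)
  then show "(\<Sum>k=1..n. real (x k)) = 2" by (metis of_nat_numeral of_nat_sum)
  show "k \<in> {1..n} \<Longrightarrow> x k \<le> 2" using assms by (simp add: J2_def)
qed

lemma fworst_le_fval: "x \<in> J2 n \<Longrightarrow> fworst n E p \<le> fval n E p x"
  unfolding fworst_def by (rule Min_le) (auto simp: finite_J2)

lemma le_fworstI:
  assumes "n \<ge> 1" "\<And>x. x \<in> J2 n \<Longrightarrow> c \<le> fval n E p x"
  shows "c \<le> fworst n E p"
  unfolding fworst_def using assms J2_concentrated[of 1 n]
  by (subst Min_ge_iff) (auto simp: finite_J2)

lemma normalized_in_simplexI:
  assumes "\<And>k. k \<in> {1..n} \<Longrightarrow> 0 \<le> w k" "(\<Sum>k=1..n. w k) > 0"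
  shows "(\<lambda>k. w k / (\<Sum>j=1..n. w j)) \<in> simplexI n"
proof -
  have "w k \<le> (\<Sum>j=1..n. w j)" if "k \<in> {1..n}" for k
    using assms(1) that by (intro member_le_sum) auto
  then show ?thesis
    using assms by (auto simp: simplexI_def sum_divide_distrib[symmetric])
qed

text \<open>If a \<le> c and x \<in> {0,1,2}, then a - a/(1+x) \<le> c x/2: each attack unit costs at most c/2.\<close>

lemma sum_div_one_plus_ge:
  fixes a :: "nat \<Rightarrow> real" and x :: "nat \<Rightarrow> nat"
  assumes "\<And>k. k \<in> K \<Longrightarrow> 0 \<le> a k \<and> a k \<le> c \<and> x k \<le> 2"
  shows "(\<Sum>k\<in>K. a k) - c / 2 * (\<Sum>k\<in>K. real (x k)) \<le> (\<Sum>k\<in>K. a k / (1 + real (x k)))"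
proof -
  have "a k - c / 2 * real (x k) \<le> a k / (1 + real (x k))" if "k \<in> K" for k
  proof -
    have "x k = 0 \<or> x k = 1 \<or> x k = 2" using assms[OF that] by auto
    then show ?thesis using assms[OF that] by auto
  qed
  then have "(\<Sum>k\<in>K. a k - c / 2 * real (x k)) \<le> (\<Sum>k\<in>K. a k / (1 + real (x k)))"
    by (rule sum_mono)
  then show ?thesis by (simp add: sum_subtractf sum_distrib_left)
qed

definition equal_alloc :: "(nat \<Rightarrow> real) \<Rightarrow> nat \<Rightarrow> nat \<Rightarrow> real" where
  "equal_alloc E v k = (if k \<le> v then (1 / E k) / (\<Sum>j=1..v. 1 / E j) else 0)"

definition head_weighted_alloc :: "(nat \<Rightarrow> real) \<Rightarrow> nat \<Rightarrow> nat \<Rightarrow> real" where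
  "head_weighted_alloc E u k =
     (let D = 3 / E 1 + (\<Sum>j=2..u. 1 / E j)
      in if k = 1 then (3 / E 1) / D else if k \<le> u then (1 / E k) / D else 0)"

lemma equal_alloc_in_simplexI:
  assumes v: "v \<in> {1..n}" and Epos: "\<And>k. k \<in> {1..n} \<Longrightarrow> 0 < E k"
  shows "equal_alloc E v \<in> simplexI n"
proof -
  define w where "w k = (if k \<le> v then 1 / E k else 0)" for k
  have w0: "0 \<le> w k" if "k \<in> {1..n}" for k using Epos[OF that] by (simp add: w_def)
  have sum_w: "(\<Sum>j=1..n. w j) = (\<Sum>j=1..v. 1 / E j)"
    unfolding w_def using v by (intro sum_if_le_atLeastAtMost) auto
  have "0 < (\<Sum>j=1..v. 1 / E j)"
    using v Epos by (intro sum_pos2[of _ 1]) (auto intro!: less_imp_le)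
  then have "(\<lambda>k. w k / (\<Sum>j=1..n. w j)) \<in> simplexI n"
    using w0 sum_w by (intro normalized_in_simplexI) auto
  moreover have "equal_alloc E v = (\<lambda>k. w k / (\<Sum>j=1..n. w j))"
    using sum_w by (auto simp: equal_alloc_def w_def)
  ultimately show ?thesis by simp
qed

lemma Vval_le_fworst_equal_alloc:
  assumes v: "v \<in> {2..n}" and Epos: "\<And>k. k \<in> {1..n} \<Longrightarrow> 0 < E k"
  shows "Vval E v \<le> fworst n E (equal_alloc E v)"
proof (rule le_fworstI)
  fix x assume x: "x \<in> J2 n"
  define H where "H = (\<Sum>j=1..v. 1 / E j)"
  have "0 < H" unfolding H_def using v Epos by (intro sum_pos2[of _ 1]) (auto intro!: less_imp_le)
  have a: "E k * equal_alloc E v k = (if k \<le> v then 1 / H else 0)" if "k \<in> {1..n}" for k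
    using Epos[OF that] by (simp add: equal_alloc_def H_def)
  have "(\<Sum>k=1..n. E k * equal_alloc E v k) - (1 / H) / 2 * (\<Sum>k=1..n. real (x k))
        \<le> fval n E (equal_alloc E v) x"
    unfolding fval_def using a J2_D(2)[OF x] \<open>0 < H\<close> by (intro sum_div_one_plus_ge) auto
  moreover have "(\<Sum>k=1..n. E k * equal_alloc E v k) = real v / H"
    using a v by (simp add: sum_if_le_atLeastAtMost)
  moreover have "Vval E v = real v / H - 1 / H"
    unfolding Vval_def H_def by (simp add: diff_divide_distrib)
  ultimately show "Vval E v \<le> fval n E (equal_alloc E v) x"
    using J2_D(1)[OF x] by simp
qed (use v in auto)

lemma head_weighted_alloc_in_simplexI:
  assumes u: "u \<in> {1..n}" and Epos: "\<And>k. k \<in> {1..n} \<Longrightarrow> 0 < E k"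
  shows "head_weighted_alloc E u \<in> simplexI n"
proof -
  define D where "D = 3 / E 1 + (\<Sum>j=2..u. 1 / E j)"
  define w where "w k = (if k = 1 then 3 / E 1 else if k \<le> u then 1 / E k else 0)" for k
  have w0: "0 \<le> w k" if "k \<in> {1..n}" for k using Epos[OF that] by (auto simp: w_def less_imp_le)
  have "0 < 3 / E 1" using Epos u by auto
  moreover have "0 \<le> (\<Sum>j=2..u. 1 / E j)" using Epos u by (intro sum_nonneg) (auto intro!: less_imp_le Epos)
  ultimately have "0 < D" unfolding D_def by linarith
  have "(\<Sum>k=2..n. w k) = (\<Sum>k=2..n. if k \<le> u then 1 / E k else 0)"
    by (intro sum.cong) (auto simp: w_def)
  also have "\<dots> = (\<Sum>k=2..u. 1 / E k)" using u by (intro sum_if_le_atLeastAtMost) auto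
  finally have sum_w: "(\<Sum>j=1..n. w j) = D"
    unfolding D_def using sum_atLeast1_head[of n w] u by (simp add: w_def)
  have "(\<lambda>k. w k / (\<Sum>j=1..n. w j)) \<in> simplexI n"
    using w0 \<open>0 < D\<close> sum_w by (intro normalized_in_simplexI) auto
  moreover have "head_weighted_alloc E u = (\<lambda>k. w k / (\<Sum>j=1..n. w j))"
    using sum_w by (auto simp: head_weighted_alloc_def w_def D_def)
  ultimately show ?thesis by simp
qed

lemma Uval_le_fworst_head_weighted_alloc:
  assumes u: "u \<in> {1..n}" and n: "2 \<le> n" and Epos: "\<And>k. k \<in> {1..n} \<Longrightarrow> 0 < E k"
  shows "Uval E u \<le> fworst n E (head_weighted_alloc E u)"
proof (rule le_fworstI)
  fix x assume x: "x \<in> J2 n"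
  let ?p = "head_weighted_alloc E u"
  define c where "c = 1 / (3 / E 1 + (\<Sum>j=2..u. 1 / E j))"
  have "0 < 3 / E 1" using Epos n by auto
  moreover have "0 \<le> (\<Sum>j=2..u. 1 / E j)" using Epos u by (intro sum_nonneg) (auto intro!: less_imp_le Epos)
  ultimately have "0 < c" unfolding c_def by (simp add: add_pos_nonneg)
  have a1: "E 1 * ?p 1 = 3 * c"
    using Epos[of 1] n by (simp add: head_weighted_alloc_def c_def)
  have a: "E k * ?p k = (if k \<le> u then c else 0)" if "k \<in> {2..n}" for k
    using Epos[of k] that by (simp add: head_weighted_alloc_def c_def)
  have "(\<Sum>k=2..n. E k * ?p k) = (real u - 1) * c"
    using a u by (simp add: sum_if_le_atLeastAtMost)
  moreover have "(\<Sum>k=2..n. real (x k)) = 2 - real (x 1)"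
    using J2_D(1)[OF x] sum_atLeast1_head[of n "\<lambda>k. real (x k)"] n by simp
  moreover have "(\<Sum>k=2..n. E k * ?p k) - c / 2 * (\<Sum>k=2..n. real (x k))
        \<le> (\<Sum>k=2..n. E k * ?p k / (1 + real (x k)))"
    using a J2_D(2)[OF x] \<open>0 < c\<close> by (intro sum_div_one_plus_ge) auto
  ultimately have tail: "(real u - 1) * c - c / 2 * (2 - real (x 1))
        \<le> (\<Sum>k=2..n. E k * ?p k / (1 + real (x k)))"
    by simp
  have "fval n E ?p x = 3 * c / (1 + real (x 1)) + (\<Sum>k=2..n. E k * ?p k / (1 + real (x k)))"
    unfolding fval_def using sum_atLeast1_head[of n "\<lambda>k. E k * ?p k / (1 + real (x k))"] n a1 by simp
  moreover have "real u * c \<le> 3 * c / (1 + real (x 1)) + ((real u - 1) * c - c / 2 * (2 - real (x 1)))"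
  proof -
    have "x 1 = 0 \<or> x 1 = 1 \<or> x 1 = 2" using J2_D(2)[OF x, of 1] n by auto
    then show ?thesis using \<open>0 < c\<close> by (auto simp: field_simps)
  qed
  moreover have "Uval E u = real u * c" by (simp add: Uval_def c_def)
  ultimately show "Uval E u \<le> fval n E ?p x" using tail by linarith
qed (use n in auto)

lemma fworst_le_concentrated:
  assumes "i \<in> {1..n}"
  shows "fworst n E p \<le> (\<Sum>k=1..n. E k * p k) - 2/3 * (E i * p i)"
proof -
  let ?x = "\<lambda>j. if j = i then 2 else 0"
  have "fval n E p ?x = (\<Sum>k=1..n. E k * p k - (if k = i then 2/3 * (E k * p k) else 0))"
    unfolding fval_def by (rule sum.cong) auto
  also have "\<dots> = (\<Sum>k=1..n. E k * p k) - 2/3 * (E i * p i)"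
    using assms by (simp add: sum_subtractf)
  finally show ?thesis using fworst_le_fval[OF J2_concentrated[OF assms], of E p] by linarith
qed

lemma fworst_le_split:
  assumes "i \<in> {1..n}" "j \<in> {1..n}" "i \<noteq> j"
  shows "fworst n E p \<le> (\<Sum>k=1..n. E k * p k) - (E i * p i + E j * p j) / 2"
proof -
  let ?x = "\<lambda>k. if k = i \<or> k = j then 1 else 0"
  have "fval n E p ?x = (\<Sum>k=1..n. E k * p k - (if k = i then E k * p k / 2 else 0)
                                            - (if k = j then E k * p k / 2 else 0))"
    unfolding fval_def using assms(3) by (intro sum.cong) auto
  also have "\<dots> = (\<Sum>k=1..n. E k * p k) - (E i * p i + E j * p j) / 2"
    using assms by (simp add: sum_subtractf add_divide_distrib)
  finally show ?thesis using fworst_le_fval[OF J2_split[OF assms], of E p] by linarith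
qed

lemma simplexI_sum_mult_one_minus_div:
  assumes "p \<in> simplexI n" "\<And>k. k \<in> {1..n} \<Longrightarrow> E k \<noteq> 0"
  shows "(\<Sum>k=1..n. E k * p k * (1 - W / E k)) = (\<Sum>k=1..n. E k * p k) - W"
proof -
  have "(\<Sum>k=1..n. E k * p k * (1 - W / E k)) = (\<Sum>k=1..n. E k * p k - W * p k)"
    using assms(2) by (intro sum.cong) (auto simp: field_simps)
  also have "\<dots> = (\<Sum>k=1..n. E k * p k) - W"
    using assms(1) by (simp add: simplexI_def sum_subtractf sum_distrib_left[symmetric])
  finally show ?thesis .
qed

lemma positive_part_sum_bounds:
  fixes E :: "nat \<Rightarrow> real"
  assumes mono: "\<And>i j. 1 \<le> i \<Longrightarrow> i \<le> j \<Longrightarrow> j \<le> n \<Longrightarrow> E j \<le> E i"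
    and Epos: "\<And>k. k \<in> {1..n} \<Longrightarrow> 0 < E k" and "1 \<le> n" "0 \<le> W"
    and U: "\<And>j. j \<in> {1..n} \<Longrightarrow> Uval E j \<le> W"
    and V: "\<And>j. j \<in> {2..n} \<Longrightarrow> Vval E j \<le> W"
  shows "(\<Sum>k=1..n. max (1 - W / E k) 0) \<le> 1"
    and "2 * max (1 - W / E 1) 0 + (\<Sum>k=1..n. max (1 - W / E k) 0) \<le> 2"
proof -
  define d where "d k = 1 - W / E k" for k
  have "d j \<le> d i" if "1 \<le> i" "i \<le> j" "j \<le> n" for i j
    using mono[OF that] Epos[of i] Epos[of j] that \<open>0 \<le> W\<close>
    by (simp add: d_def divide_left_mono)
  then obtain q where q: "q \<le> n" "\<And>k. k \<in> {1..n} \<Longrightarrow> max (d k) 0 = (if k \<le> q then d k else 0)"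
    using antimono_positive_part_truncation by blast
  have "(\<Sum>k=1..n. max (d k) 0) = (\<Sum>k=1..n. if k \<le> q then d k else 0)"
    using q(2) by (intro sum.cong) auto
  also have "\<dots> = (\<Sum>k=1..q. d k)" using q(1) by (intro sum_if_le_atLeastAtMost)
  finally have sum_e: "(\<Sum>k=1..n. max (d k) 0) = real q - W * (\<Sum>k=1..q. 1 / E k)"
    by (simp add: d_def sum_subtractf sum_distrib_left)
  have "(\<Sum>k=1..n. max (d k) 0) \<le> 1 \<and> 2 * max (d 1) 0 + (\<Sum>k=1..n. max (d k) 0) \<le> 2"
  proof (cases "q = 0")
    case True
    then show ?thesis using q(2)[of 1] sum_e \<open>1 \<le> n\<close> by auto
  next
    case False
    define T where "T = (\<Sum>k=2..q. 1 / E k)"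
    have E1: "0 < E 1" using Epos False q(1) by auto
    have "0 \<le> T" unfolding T_def using Epos q(1) by (intro sum_nonneg) (auto intro!: less_imp_le)
    have H: "(\<Sum>k=1..q. 1 / E k) = 1 / E 1 + T"
      unfolding T_def using False by (intro sum_atLeast1_head) auto
    have "Uval E q \<le> W" using U False q(1) by auto
    then have "real q \<le> W * (3 / E 1 + T)"
      using E1 \<open>0 \<le> T\<close> by (simp add: Uval_def T_def pos_divide_le_eq mult.commute add_pos_nonneg)
    then have sum_U: "2 * d 1 + (\<Sum>k=1..n. max (d k) 0) \<le> 2"
      using sum_e H E1 by (simp add: d_def field_simps)
    have "real q - 1 \<le> W * (\<Sum>k=1..q. 1 / E k)"
    proof (cases "q = 1")
      case True then show ?thesis using \<open>0 \<le> W\<close> E1 by simp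
    next
      case False
      have "0 < (\<Sum>k=1..q. 1 / E k)" using H E1 \<open>0 \<le> T\<close> by (simp add: add_pos_nonneg)
      moreover have "Vval E q \<le> W" using V False \<open>q \<noteq> 0\<close> q(1) by auto
      ultimately show ?thesis by (simp add: Vval_def pos_divide_le_eq mult.commute)
    qed
    then show ?thesis using sum_U sum_e q(2)[of 1] False q(1) by auto
  qed
  then show "(\<Sum>k=1..n. max (1 - W / E k) 0) \<le> 1"
    and "2 * max (1 - W / E 1) 0 + (\<Sum>k=1..n. max (1 - W / E k) 0) \<le> 2"
    by (simp_all add: d_def)
qed

lemma fworst_le_of_Uval_Vval_le:
  fixes E :: "nat \<Rightarrow> real"
  assumes n: "2 \<le> n" and mono: "\<And>i j. 1 \<le> i \<Longrightarrow> i \<le> j \<Longrightarrow> j \<le> n \<Longrightarrow> E j \<le> E i"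
    and Epos: "\<And>k. k \<in> {1..n} \<Longrightarrow> 0 < E k"
    and U: "\<And>j. j \<in> {1..n} \<Longrightarrow> Uval E j \<le> W"
    and V: "\<And>j. j \<in> {2..n} \<Longrightarrow> Vval E j \<le> W"
    and p: "p \<in> simplexI n"
  shows "fworst n E p \<le> W"
proof -
  define a where "a k = E k * p k" for k
  define e where "e k = max (1 - W / E k) 0" for k
  have a0: "0 \<le> a k" if "k \<in> {1..n}" for k
    using Epos[OF that] p that by (simp add: a_def simplexI_def)
  have "0 < Uval E 1" using Epos[of 1] n by (simp add: Uval_def)
  then have "0 \<le> W" using U[of 1] n by simp
  obtain i where i: "i \<in> {1..n}" "\<And>k. k \<in> {1..n} \<Longrightarrow> a k \<le> a i"
    using finite_obtain_argmax[of "{1..n}" a] n by auto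
  have "(if i = 1 then 2 else 1) \<in> {1..n} - {i}" using n i(1) by auto
  then have "{1..n} - {i} \<noteq> {}" by blast
  then obtain j where j: "j \<in> {1..n} - {i}" "\<And>k. k \<in> {1..n} - {i} \<Longrightarrow> a k \<le> a j"
    using finite_obtain_argmax[of "{1..n} - {i}" a] by auto
  have "(\<Sum>k=1..n. a k) - W = (\<Sum>k=1..n. a k * (1 - W / E k))"
    unfolding a_def using simplexI_sum_mult_one_minus_div[OF p, of E W] Epos by fastforce
  also have "\<dots> \<le> (\<Sum>k=1..n. a k * e k)"
    using a0 by (intro sum_mono mult_left_mono) (auto simp: e_def)
  also have "\<dots> \<le> (a i - a j) * e i + a j * (\<Sum>k=1..n. e k)"
    using i(1) j(2) by (intro sum_mult_le_top_two) (auto simp: e_def)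
  also have "\<dots> \<le> max (2/3 * a i) ((a i + a j) / 2)"
  proof (rule top_two_excess_bound)
    have "W / E 1 \<le> W / E i"
      using mono[of 1 i] i(1) Epos[OF i(1)] \<open>0 \<le> W\<close> by (intro divide_left_mono) auto
    then show "e i \<le> e 1" by (auto simp: e_def)
    show "e 1 \<le> (\<Sum>k=1..n. e k)" using n by (intro member_le_sum) (auto simp: e_def)
    show "(\<Sum>k=1..n. e k) \<le> 1" "2 * e 1 + (\<Sum>k=1..n. e k) \<le> 2"
      unfolding e_def using positive_part_sum_bounds[OF mono Epos _ \<open>0 \<le> W\<close> U V] n by auto
    show "0 \<le> a j" using a0 j(1) by simp
    show "a j \<le> a i" using i(2) j(1) by simp
  qed
  moreover have "fworst n E p \<le> (\<Sum>k=1..n. a k) - 2/3 * a i"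
    using fworst_le_concentrated[OF i(1)] by (simp add: a_def)
  moreover have "fworst n E p \<le> (\<Sum>k=1..n. a k) - (a i + a j) / 2"
    using fworst_le_split[of i n j] i(1) j(1) by (simp add: a_def)
  ultimately show ?thesis by linarith
qed

lemma uidx_argmax:
  assumes "1 \<le> n"
  shows "uidx n E \<in> {1..n}" "\<And>j. j \<in> {1..n} \<Longrightarrow> Uval E j \<le> Uval E (uidx n E)"
proof -
  obtain i where "i \<in> {1..n}" "\<And>j. j \<in> {1..n} \<Longrightarrow> Uval E j \<le> Uval E i"
    by (rule finite_obtain_argmax[of "{1..n}" "Uval E"]) (use assms in auto)
  then have "uidx n E \<in> {1..n} \<and> (\<forall>j\<in>{1..n}. Uval E j \<le> Uval E (uidx n E))"
    unfolding uidx_def by - (rule LeastI_ex, blast)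
  then show "uidx n E \<in> {1..n}" "\<And>j. j \<in> {1..n} \<Longrightarrow> Uval E j \<le> Uval E (uidx n E)" by auto
qed

lemma vidx_argmax:
  assumes "2 \<le> n"
  shows "vidx n E \<in> {2..n}" "\<And>j. j \<in> {2..n} \<Longrightarrow> Vval E j \<le> Vval E (vidx n E)"
proof -
  obtain i where "i \<in> {2..n}" "\<And>j. j \<in> {2..n} \<Longrightarrow> Vval E j \<le> Vval E i"
    by (rule finite_obtain_argmax[of "{2..n}" "Vval E"]) (use assms in auto)
  then have "vidx n E \<in> {2..n} \<and> (\<forall>j\<in>{2..n}. Vval E j \<le> Vval E (vidx n E))"
    unfolding vidx_def by - (rule LeastI_ex, blast)
  then show "vidx n E \<in> {2..n}" "\<And>j. j \<in> {2..n} \<Longrightarrow> Vval E j \<le> Vval E (vidx n E)" by auto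
qed

theorem theorem3:
  fixes n :: nat and E :: "nat \<Rightarrow> real"
  assumes hn: "n \<ge> 2"
    and hmono: "\<And>i j. 1 \<le> i \<Longrightarrow> i \<le> j \<Longrightarrow> j \<le> n \<Longrightarrow> E j \<le> E i"
    and hpos: "E n > 0"
  shows
   "(Vval E (vidx n E) > Uval E (uidx n E) \<longrightarrow>
      (let v = vidx n E;
           ps = (\<lambda>k. if k \<le> v then (1 / E k) / (\<Sum>j=1..v. 1 / E j) else 0)
       in ps \<in> simplexI n \<and> (\<forall>p\<in>simplexI n. fworst n E p \<le> fworst n E ps)
          \<and> fworst n E ps = max (Uval E (uidx n E)) (Vval E (vidx n E))))
  \<and> (Uval E (uidx n E) \<ge> Vval E (vidx n E) \<longrightarrow>
      (let u = uidx n E;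
           D = 3 / E 1 + (\<Sum>j=2..u. 1 / E j);
           ps = (\<lambda>k. if k = 1 then (3 / E 1) / D
                      else if k \<le> u then (1 / E k) / D else 0)
       in ps \<in> simplexI n \<and> (\<forall>p\<in>simplexI n. fworst n E p \<le> fworst n E ps)
          \<and> fworst n E ps = max (Uval E (uidx n E)) (Vval E (vidx n E))))"
proof -
  define u v where "u = uidx n E" and "v = vidx n E"
  define W where "W = max (Uval E u) (Vval E v)"
  have Epos: "0 < E k" if "k \<in> {1..n}" for k
    using hmono[of k n] that hpos by auto
  have "1 \<le> n" using hn by simp
  note u = uidx_argmax[OF this, where E=E, folded u_def]
    and v = vidx_argmax[OF hn, where E=E, folded v_def]
  have upper: "fworst n E p \<le> W" if "p \<in> simplexI n" for p
  proof (rule fworst_le_of_Uval_Vval_le[OF hn hmono Epos _ _ that])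
    show "Uval E j \<le> W" if "j \<in> {1..n}" for j using u(2)[OF that] by (simp add: W_def)
    show "Vval E j \<le> W" if "j \<in> {2..n}" for j using v(2)[OF that] by (simp add: W_def)
  qed
  have optimal: "(\<forall>p\<in>simplexI n. fworst n E p \<le> fworst n E ps) \<and> fworst n E ps = W"
    if "ps \<in> simplexI n" "W \<le> fworst n E ps" for ps
    using upper[OF that(1)] upper that(2) by force
  have eqV: "(\<lambda>k. if k \<le> v then (1 / E k) / (\<Sum>j=1..v. 1 / E j) else 0) = equal_alloc E v"
    by (simp add: equal_alloc_def fun_eq_iff)
  have eqU: "(\<lambda>k. if k = 1 then (3 / E 1) / (3 / E 1 + (\<Sum>j=2..u. 1 / E j))
                      else if k \<le> u then (1 / E k) / (3 / E 1 + (\<Sum>j=2..u. 1 / E j)) else 0)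
      = head_weighted_alloc E u"
    by (simp add: head_weighted_alloc_def fun_eq_iff Let_def)
  have "equal_alloc E v \<in> simplexI n" "head_weighted_alloc E u \<in> simplexI n"
    using v(1) u(1) Epos by (auto intro: equal_alloc_in_simplexI head_weighted_alloc_in_simplexI)
  moreover have "Uval E u < Vval E v \<Longrightarrow> W \<le> fworst n E (equal_alloc E v)"
    using Vval_le_fworst_equal_alloc[OF v(1) Epos] by (simp add: W_def)
  moreover have "Vval E v \<le> Uval E u \<Longrightarrow> W \<le> fworst n E (head_weighted_alloc E u)"
    using Uval_le_fworst_head_weighted_alloc[OF u(1) hn Epos] by (simp add: W_def)
  ultimately show ?thesis
    using optimal
    unfolding Let_def u_def[symmetric] v_def[symmetric] W_def[symmetric] eqV eqU by (meson not_le)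
qed

end
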